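(* Let $X$ be an irreducible Markov chain on a finite state space $\overline{F}$ with transition matrix $r$ which is reversible for its stationary distribution $\eta=(\eta_j:j\in\overline{F})$, and let $\boldsymbol{\alpha}=(\alpha_j:j\in\overline{F})\in[0,1]^{\overline{F}}$ be non-zero. Let $r^{(\boldsymbol{\alpha})}_{skip}=(I-rI_{(1-\boldsymbol{\alpha})})^{-1}rI_{\boldsymbol{\alpha}}$ be the modification of $r$ by randomized skipping, and let $r^{(\boldsymbol{\alpha})}_{refl}$ be the modification of $r$ by randomized reflection, i.e. $r^{(\boldsymbol{\alpha})}_{refl}(i,j)=r(i,j)\alpha_j$ for $i\neq j$ and $r^{(\boldsymbol{\alpha})}_{refl}(i,i)=1-\sum_{j\neq i}r(i,j)\alpha_j$. Then $r^{(\boldsymbol{\alpha})}_{refl}\prec_P r^{(\boldsymbol{\alpha})}_{skip}$.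
   Context: $I_{\boldsymbol{\alpha}}$, $I_{(1-\boldsymbol{\alpha})}$ are the diagonal matrices with entries $\alpha_j$, resp. $1-\alpha_j$. Peskun order: for transition matrices $r,r'$ on a finite set $\overline{F}$ with $\xi r=\xi r'=\xi$ for some probability vector $\xi$, one writes $r'\prec_P r$ if $r'(j,i)\le r(j,i)$ for all $i,j\in\overline{F}$ with $i\neq j$. (Both modifications have stationary distribution proportional to $(\eta_j\alpha_j:j\in\overline{F})$.) *)

theory Defs
  imports "HOL-Analysis.Analysis"
begin

text \<open>Finite state space = finite index type 'n; matrices are real^'n^'n, row i = from-state i.\<close>

definition stochastic :: "real^'n^'n \<Rightarrow> bool" where
  "stochastic P \<longleftrightarrow> (\<forall>i j. 0 \<le> P$i$j) \<and> (\<forall>i. (\<Sum>j\<in>UNIV. P$i$j) = 1)"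

definition prob_vec :: "real^'n \<Rightarrow> bool" where
  "prob_vec v \<longleftrightarrow> (\<forall>i. 0 \<le> v$i) \<and> (\<Sum>i\<in>UNIV. v$i) = 1"

definition mat_pow :: "real^'n^'n \<Rightarrow> nat \<Rightarrow> real^'n^'n" where
  "mat_pow P k = ((\<lambda>M. M ** P) ^^ k) (mat 1)"

definition irreducible_chain :: "real^'n^'n \<Rightarrow> bool" where
  "irreducible_chain P \<longleftrightarrow> (\<forall>i j. \<exists>k. 0 < mat_pow P k $i$j)"

definition reversible :: "real^'n^'n \<Rightarrow> real^'n \<Rightarrow> bool" where
  "reversible P \<eta> \<longleftrightarrow> (\<forall>i j. \<eta>$i * P$i$j = \<eta>$j * P$j$i)"

definition diag_mat :: "real^'n \<Rightarrow> real^'n^'n" where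
  "diag_mat v = (\<chi> i j. if i = j then v$i else 0)"

definition skip_mod :: "real^'n^'n \<Rightarrow> real^'n \<Rightarrow> real^'n^'n" where
  "skip_mod r \<alpha> =
     matrix_inv (mat 1 - r ** diag_mat (\<chi> j. 1 - \<alpha>$j)) ** r ** diag_mat \<alpha>"

definition refl_mod :: "real^'n^'n \<Rightarrow> real^'n \<Rightarrow> real^'n^'n" where
  "refl_mod r \<alpha> = (\<chi> i j. if i \<noteq> j then r$i$j * \<alpha>$j
                          else 1 - (\<Sum>k\<in>UNIV - {i}. r$i$k * \<alpha>$k))"

definition peskun_le :: "real^'n^'n \<Rightarrow> real^'n^'n \<Rightarrow> bool" where
  "peskun_le r' r \<longleftrightarrow> stochastic r \<and> stochastic r' \<and>
     (\<exists>\<xi>. prob_vec \<xi> \<and> \<xi> v* r = \<xi> \<and> \<xi> v* r' = \<xi>) \<and>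
     (\<forall>i j. i \<noteq> j \<longrightarrow> r'$j$i \<le> r$j$i)"

end

(*
  Let Q = r I_(1-alpha), the kernel of the moves after which the skipping chain keeps going
  (on entering j it stops with probability alpha_j).  Everything rests on a minimum principle:
  if r is irreducible and alpha is non-zero, every s with Q s <= s is nonnegative.  At a
  negative minimum of s the inequality forces all successors to attain the minimum and to
  have alpha = 0; irreducibility spreads this over the whole state space, contradicting the
  existence of a predecessor of a state with alpha_j > 0.

  Hence Q-harmonic vectors vanish, I - Q is invertible, and S = r_skip solves
  S = Q S + r I_alpha.  The minimum principle applied to the columns of S and to S 1 - 1 shows
  that S is stochastic, and the same equation gives S(j,i) >= r(j,i) alpha_i = r_refl(j,i) for
  i ~= j.  Both chains fix eta I_alpha: r_refl by detailed balance, S since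
  eta (I - Q) = eta I_alpha.
*)

theory Submission
  imports Defs
begin

lemma matrix_mul_diag_mat_nth [simp]: "(A ** diag_mat v)$i$j = A$i$j * v$j"
  by (simp add: matrix_matrix_mult_def diag_mat_def if_distrib cong: if_cong)

lemma vector_mul_diag_mat_nth [simp]: "(x v* diag_mat v)$j = x$j * v$j"
  by (simp add: vector_matrix_mult_def diag_mat_def if_distrib cong: if_cong)

lemma matrix_mul_diag_mat_complement:
  fixes r :: "real^'n^'m"
  shows "r ** diag_mat (\<chi> j. 1 - \<alpha>$j) + r ** diag_mat \<alpha> = r"
  by (simp add: vec_eq_iff algebra_simps)

lemma matrix_mul_matrix_inv: "invertible A \<Longrightarrow> A ** matrix_inv A = mat 1"
  unfolding matrix_inv_def invertible_def by (rule someI2_ex) auto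

lemma matrix_diff_rdistrib:
  fixes A B :: "'a::ring_1^'n^'m"
  shows "(A - B) ** C = A ** C - B ** C"
  by (simp add: matrix_matrix_mult_def vec_eq_iff sum_subtractf left_diff_distrib)

lemma stochastic_nonneg: "stochastic P \<Longrightarrow> 0 \<le> P$i$j"
  by (simp add: stochastic_def)

lemma stochastic_mult_one: "stochastic P \<Longrightarrow> P *v 1 = 1"
  by (simp add: stochastic_def matrix_vector_mult_def vec_eq_iff)

lemma matrix_mul_nonneg:
  fixes A B :: "'a::linordered_semidom^'n^'n"
  assumes "\<And>i j. 0 \<le> A$i$j" and "\<And>i j. 0 \<le> B$i$j"
  shows "0 \<le> (A ** B)$i$j"
  using assms by (simp add: matrix_matrix_mult_def sum_nonneg)

lemma mat_pow_Suc: "mat_pow P (Suc k) = mat_pow P k ** P"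
  by (simp add: mat_pow_def)

lemma mat_pow_nonneg:
  assumes "stochastic P"
  shows "0 \<le> mat_pow P k $i$j"
proof (induction k arbitrary: i j)
  case 0
  then show ?case by (simp add: mat_pow_def mat_def)
next
  case (Suc k)
  then show ?case
    using assms by (simp add: mat_pow_Suc matrix_mul_nonneg stochastic_nonneg)
qed

lemma mat_pow_Suc_pos_imp:
  assumes "stochastic P" and "0 < mat_pow P (Suc k) $i$j"
  obtains l where "0 < mat_pow P k $i$l" and "0 < P$l$j"
proof -
  have "0 < (\<Sum>l\<in>UNIV. mat_pow P k $i$l * P$l$j)"
    using assms(2) by (simp add: mat_pow_Suc matrix_matrix_mult_def)
  then obtain l where "0 < mat_pow P k $i$l * P$l$j"
    using sum_nonpos[of UNIV "\<lambda>l. mat_pow P k $i$l * P$l$j"] by (meson not_less)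
  moreover have "0 \<le> mat_pow P k $i$l"
    by (rule mat_pow_nonneg[OF assms(1)])
  ultimately show thesis
    using that by (auto simp: zero_less_mult_iff)
qed

lemma stationary_mat_pow: "\<eta> v* P = \<eta> \<Longrightarrow> \<eta> v* mat_pow P k = \<eta>"
  by (induction k) (simp_all add: mat_pow_def vector_matrix_mul_assoc[symmetric])

lemma irreducible_stationary_pos:
  assumes "stochastic r" and "irreducible_chain r" and "prob_vec \<eta>" and "\<eta> v* r = \<eta>"
  shows "0 < \<eta>$j"
proof -
  obtain i where i: "0 < \<eta>$i"
    using assms(3) sum_nonpos[of UNIV "\<lambda>i. \<eta>$i"] by (force simp: prob_vec_def not_less)
  obtain k where k: "0 < mat_pow r k $i$j"
    using assms(2) by (auto simp: irreducible_chain_def)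
  have "0 < mat_pow r k $i$j * \<eta>$i"
    using i k by simp
  also have "\<dots> \<le> (\<Sum>l\<in>UNIV. mat_pow r k $l$j * \<eta>$l)"
    using assms(1,3) by (intro member_le_sum) (auto simp: prob_vec_def mat_pow_nonneg)
  also have "\<dots> = (\<eta> v* mat_pow r k)$j"
    by (simp add: vector_matrix_mult_def mult.commute)
  finally show ?thesis
    using stationary_mat_pow[OF assms(4)] by simp
qed

lemma irreducible_closed_set_eq_UNIV:
  assumes "stochastic r" and "irreducible_chain r" and "i \<in> A"
    and closed: "\<And>i k. i \<in> A \<Longrightarrow> 0 < r$i$k \<Longrightarrow> k \<in> A"
  shows "A = UNIV"
proof -
  have "j \<in> A" if "0 < mat_pow r n $i$j" for n j
    using that
  proof (induction n arbitrary: j)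
    case 0
    then show ?case using assms(3) by (simp add: mat_pow_def mat_def split: if_splits)
  next
    case (Suc n)
    then show ?case using assms(1) closed by (metis mat_pow_Suc_pos_imp)
  qed
  then show ?thesis
    using assms(2) unfolding irreducible_chain_def by blast
qed

lemma irreducible_has_predecessor:
  assumes "stochastic r" and "irreducible_chain r"
  obtains l where "0 < r$l$j"
proof -
  obtain k where "0 < r$j$k"
    using assms(1) sum_nonpos[of UNIV "\<lambda>k. r$j$k"]
    by (force simp: stochastic_def not_less)
  moreover obtain n where "0 < mat_pow r n $k$j"
    using assms(2) by (auto simp: irreducible_chain_def)
  ultimately show thesis
    using that assms(1)
    by (cases n) (auto simp: mat_pow_def mat_def split: if_splits elim: mat_pow_Suc_pos_imp)
qed

lemma killed_term_lower_bound:
  fixes a s m :: real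
  assumes "m < 0" "m \<le> s" "0 \<le> a" "a \<le> 1"
  shows "m \<le> (1 - a) * s"
proof (cases "0 \<le> s")
  case True
  then show ?thesis using assms by (simp add: order.trans[OF less_imp_le])
next
  case False
  then have "s \<le> (1 - a) * s"
    using assms(3) by (simp add: algebra_simps mult_nonneg_nonpos)
  then show ?thesis using assms(2) by linarith
qed

lemma killed_term_eq_bound:
  fixes a s m :: real
  assumes "m < 0" "m \<le> s" "0 \<le> a" "a \<le> 1" and "(1 - a) * s = m"
  shows "a = 0 \<and> s = m"
proof -
  have "s < 0"
    using assms by (smt (verit) mult_nonneg_nonneg)
  moreover have "0 \<le> a * s"
    using assms(2,5) by (simp add: algebra_simps)
  ultimately have "a = 0"
    using assms(3) by (smt (verit) mult_pos_neg)
  then show ?thesis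
    using assms(5) by simp
qed

lemma killed_mult_nth:
  "((r ** diag_mat (\<chi> j. 1 - \<alpha>$j)) *v s)$i = (\<Sum>k\<in>UNIV. r$i$k * ((1 - \<alpha>$k) * s$k))"
  by (simp add: matrix_vector_mult_def mult.assoc)

lemma killed_superharmonic_min_step:
  fixes r :: "real^'n^'n" and \<alpha> s :: "real^'n"
  assumes "stochastic r" and "\<forall>j. 0 \<le> \<alpha>$j \<and> \<alpha>$j \<le> 1"
    and super: "(r ** diag_mat (\<chi> j. 1 - \<alpha>$j)) *v s \<le> s"
    and "m < 0" and min: "\<And>j. m \<le> s$j" and "s$i = m" and "0 < r$i$k"
  shows "\<alpha>$k = 0 \<and> s$k = m"
proof -
  let ?d = "\<lambda>k. r$i$k * ((1 - \<alpha>$k) * s$k - m)"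
  have d_nonneg: "0 \<le> ?d k" for k
  proof -
    have "m \<le> (1 - \<alpha>$k) * s$k"
      using assms(2,4) min by (intro killed_term_lower_bound) auto
    then show ?thesis
      using stochastic_nonneg[OF assms(1)] by simp
  qed
  have "(\<Sum>k\<in>UNIV. ?d k)
      = (\<Sum>k\<in>UNIV. r$i$k * ((1 - \<alpha>$k) * s$k)) - (\<Sum>k\<in>UNIV. r$i$k) * m"
    by (simp add: right_diff_distrib sum_subtractf sum_distrib_right)
  also have "\<dots> = ((r ** diag_mat (\<chi> j. 1 - \<alpha>$j)) *v s)$i - m"
    using assms(1) by (simp add: killed_mult_nth stochastic_def)
  also have "\<dots> \<le> 0"
    using super[unfolded less_eq_vec_def, rule_format, of i] \<open>s$i = m\<close> by simp
  finally have "(\<Sum>k\<in>UNIV. ?d k) = 0"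
    using d_nonneg by (intro antisym sum_nonneg) auto
  then have "?d k = 0"
    using d_nonneg by (simp add: sum_nonneg_eq_0_iff)
  then show ?thesis
    using assms by (intro killed_term_eq_bound) auto
qed

context
  fixes r :: "real^'n^'n" and \<alpha> :: "real^'n"
  assumes stochastic: "stochastic r" and irreducible: "irreducible_chain r"
    and \<alpha>_range: "\<forall>j. 0 \<le> \<alpha>$j \<and> \<alpha>$j \<le> 1" and \<alpha>_nonzero: "\<alpha> \<noteq> 0"
begin

lemma killed_superharmonic_nonneg:
  assumes "(r ** diag_mat (\<chi> j. 1 - \<alpha>$j)) *v s \<le> s"
  shows "0 \<le> s"
proof (rule ccontr)
  obtain i0 where "is_arg_min (($) s) (\<lambda>i. i \<in> UNIV) i0"
    using ex_is_arg_min_if_finite[of UNIV "($) s"] by auto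
  then have min: "\<And>j. s$i0 \<le> s$j"
    by (simp add: is_arg_min_linorder)
  assume "\<not> 0 \<le> s"
  then obtain j where "s$j < 0"
    by (auto simp: less_eq_vec_def not_le)
  then have "s$i0 < 0"
    using min[of j] by linarith
  let ?A = "{i. s$i = s$i0}"
  have step: "\<alpha>$k = 0 \<and> k \<in> ?A" if "i \<in> ?A" "0 < r$i$k" for i k
  proof -
    have "s$i = s$i0" using that(1) by simp
    from killed_superharmonic_min_step[OF stochastic \<alpha>_range assms \<open>s$i0 < 0\<close> min this that(2)]
    show ?thesis by simp
  qed
  have "?A = UNIV"
    by (rule irreducible_closed_set_eq_UNIV[OF stochastic irreducible, of i0]) (use step in blast)+
  obtain j0 where "\<alpha>$j0 \<noteq> 0"
    using \<alpha>_nonzero by (auto simp: vec_eq_iff)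
  moreover obtain l where "0 < r$l$j0"
    using irreducible_has_predecessor[OF stochastic irreducible] .
  ultimately show False
    using step \<open>?A = UNIV\<close> by blast
qed

lemma killed_harmonic_eq_0:
  assumes "(r ** diag_mat (\<chi> j. 1 - \<alpha>$j)) *v z = z"
  shows "z = 0"
proof -
  have "(r ** diag_mat (\<chi> j. 1 - \<alpha>$j)) *v (- z) = - z"
    using assms by (simp add: matrix_vector_mult_def vec_eq_iff sum_negf)
  then have "0 \<le> -z"
    by (intro killed_superharmonic_nonneg) simp
  moreover have "0 \<le> z"
    using assms by (intro killed_superharmonic_nonneg) simp
  ultimately show ?thesis
    by (simp add: order.antisym)
qed

lemma invertible_id_minus_killed:
  "invertible (mat 1 - r ** diag_mat (\<chi> j. 1 - \<alpha>$j))"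
proof -
  have "inj ((*v) (mat 1 - r ** diag_mat (\<chi> j. 1 - \<alpha>$j)))"
  proof (rule injI)
    fix x y
    assume "(mat 1 - r ** diag_mat (\<chi> j. 1 - \<alpha>$j)) *v x
          = (mat 1 - r ** diag_mat (\<chi> j. 1 - \<alpha>$j)) *v y"
    then have "(r ** diag_mat (\<chi> j. 1 - \<alpha>$j)) *v (x - y) = x - y"
      by (simp add: algebra_simps)
    from killed_harmonic_eq_0[OF this] show "x = y"
      by simp
  qed
  then show ?thesis
    using matrix_left_invertible_injective invertible_left_inverse by blast
qed

lemma id_minus_killed_mult_skip_mod:
  "(mat 1 - r ** diag_mat (\<chi> j. 1 - \<alpha>$j)) ** skip_mod r \<alpha> = r ** diag_mat \<alpha>"
  using matrix_mul_matrix_inv[OF invertible_id_minus_killed]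
  by (simp add: skip_mod_def matrix_mul_assoc)

lemma skip_mod_fixpoint:
  "skip_mod r \<alpha> = r ** diag_mat (\<chi> j. 1 - \<alpha>$j) ** skip_mod r \<alpha> + r ** diag_mat \<alpha>"
  using id_minus_killed_mult_skip_mod by (simp add: matrix_diff_rdistrib algebra_simps)

lemma skip_mod_nonneg: "0 \<le> skip_mod r \<alpha> $j$i"
proof -
  let ?c = "skip_mod r \<alpha> *v axis i 1"
  have "r ** diag_mat (\<chi> j. 1 - \<alpha>$j) *v ?c = ?c - (r ** diag_mat \<alpha>) *v axis i 1"
    by (subst (2) skip_mod_fixpoint) (simp add: matrix_vector_mul_assoc algebra_simps)
  also have "\<dots> \<le> ?c"
    using stochastic \<alpha>_range
    by (simp add: matrix_vector_mult_basis column_def less_eq_vec_def stochastic_nonneg)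
  finally have "0 \<le> ?c"
    by (rule killed_superharmonic_nonneg)
  then show ?thesis
    by (simp add: matrix_vector_mult_basis column_def less_eq_vec_def)
qed

lemma skip_mod_mult_one: "skip_mod r \<alpha> *v 1 = 1"
proof -
  let ?t = "skip_mod r \<alpha> *v 1 - 1"
  have "r ** diag_mat (\<chi> j. 1 - \<alpha>$j) *v ?t
      = skip_mod r \<alpha> *v 1 - (r ** diag_mat (\<chi> j. 1 - \<alpha>$j) + r ** diag_mat \<alpha>) *v 1"
    by (subst (2) skip_mod_fixpoint) (simp add: matrix_vector_mul_assoc algebra_simps)
  also have "\<dots> = ?t"
    using stochastic by (simp add: matrix_mul_diag_mat_complement stochastic_mult_one)
  finally have "?t = 0"
    by (rule killed_harmonic_eq_0)
  then show ?thesis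
    by simp
qed

lemma stochastic_skip_mod: "stochastic (skip_mod r \<alpha>)"
  using skip_mod_nonneg skip_mod_mult_one
  by (simp add: stochastic_def matrix_vector_mult_def vec_eq_iff)

lemma skip_mod_stationary:
  assumes "\<eta> v* r = \<eta>"
  shows "(\<eta> v* diag_mat \<alpha>) v* skip_mod r \<alpha> = \<eta> v* diag_mat \<alpha>"
proof -
  have "\<eta> v* (mat 1 - r ** diag_mat (\<chi> j. 1 - \<alpha>$j)) = \<eta> v* diag_mat \<alpha>"
    using assms by (simp add: vec_eq_iff algebra_simps flip: vector_matrix_mul_assoc)
  then have "(\<eta> v* diag_mat \<alpha>) v* skip_mod r \<alpha> = \<eta> v* (r ** diag_mat \<alpha>)"
    by (metis id_minus_killed_mult_skip_mod vector_matrix_mul_assoc)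
  then show ?thesis
    using assms by (simp flip: vector_matrix_mul_assoc)
qed

lemma refl_mod_le_skip_mod:
  assumes "i \<noteq> j"
  shows "refl_mod r \<alpha> $j$i \<le> skip_mod r \<alpha> $j$i"
proof -
  have "0 \<le> (r ** diag_mat (\<chi> j. 1 - \<alpha>$j) ** skip_mod r \<alpha>) $j$i"
    by (rule matrix_mul_nonneg)
      (use stochastic \<alpha>_range in \<open>simp_all add: stochastic_nonneg skip_mod_nonneg\<close>)
  then show ?thesis
    using assms by (subst skip_mod_fixpoint) (simp add: refl_mod_def)
qed

end

lemma stochastic_refl_mod:
  assumes "stochastic r" and "\<forall>j. 0 \<le> \<alpha>$j \<and> \<alpha>$j \<le> 1"
  shows "stochastic (refl_mod r \<alpha>)"
proof -
  have off_diag: "(\<Sum>k\<in>UNIV - {i}. refl_mod r \<alpha> $i$k) = (\<Sum>k\<in>UNIV - {i}. r$i$k * \<alpha>$k)" for i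
    by (rule sum.cong) (auto simp: refl_mod_def)
  have "(\<Sum>k\<in>UNIV - {i}. r$i$k * \<alpha>$k) \<le> (\<Sum>k\<in>UNIV - {i}. r$i$k)" for i
    using assms by (intro sum_mono) (simp add: mult_left_le stochastic_nonneg)
  also have "(\<Sum>k\<in>UNIV - {i}. r$i$k) \<le> (\<Sum>k\<in>UNIV. r$i$k)" for i
    using assms(1) by (intro sum_mono2) (auto simp: stochastic_nonneg)
  finally have "0 \<le> refl_mod r \<alpha> $i$j" for i j
    using assms by (auto simp: stochastic_def refl_mod_def)
  moreover have "(\<Sum>k\<in>UNIV. refl_mod r \<alpha> $i$k) = 1" for i
    using sum.remove[of UNIV i "\<lambda>k. refl_mod r \<alpha> $i$k"] off_diag[of i]
    by (simp add: refl_mod_def)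
  ultimately show ?thesis
    by (simp add: stochastic_def)
qed

lemma reversible_refl_mod:
  assumes "reversible r \<eta>"
  shows "reversible (refl_mod r \<alpha>) (\<eta> v* diag_mat \<alpha>)"
  using assms unfolding reversible_def refl_mod_def
  by (simp add: algebra_simps)

lemma reversible_stationary:
  assumes "stochastic P" and "reversible P w"
  shows "w v* P = w"
proof -
  have "(w v* P)$j = (\<Sum>i\<in>UNIV. w$j * P$j$i)" for j
    using assms(2) by (simp add: vector_matrix_mult_def reversible_def)
  then show ?thesis
    using assms(1) by (simp add: vec_eq_iff stochastic_def flip: sum_distrib_left)
qed

lemma prob_vec_normalize:
  fixes w :: "real^'n"
  assumes "0 \<le> w" and "w \<noteq> 0"
  shows "prob_vec ((1 / (\<Sum>i\<in>UNIV. w$i)) *s w)"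
proof -
  obtain j where "w$j \<noteq> 0"
    using assms(2) by (auto simp: vec_eq_iff)
  then have "0 < w$j"
    using assms(1) by (simp add: less_eq_vec_def order_le_neq_trans)
  also have "\<dots> \<le> (\<Sum>i\<in>UNIV. w$i)"
    using assms(1) by (intro member_le_sum) (auto simp: less_eq_vec_def)
  finally show ?thesis
    using assms(1) by (simp add: prob_vec_def less_eq_vec_def sum_divide_distrib[symmetric])
qed

theorem proposition2p10:
  fixes r :: "real^'n^'n" and \<eta> \<alpha> :: "real^'n"
  assumes "stochastic r"
    and "irreducible_chain r"
    and "prob_vec \<eta>"
    and "\<eta> v* r = \<eta>"
    and "reversible r \<eta>"
    and "\<forall>j. 0 \<le> \<alpha>$j \<and> \<alpha>$j \<le> 1"
    and "\<alpha> \<noteq> 0"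
  shows "invertible (mat 1 - r ** diag_mat (\<chi> j. 1 - \<alpha>$j))
         \<and> peskun_le (refl_mod r \<alpha>) (skip_mod r \<alpha>)"
proof -
  define w where "w = \<eta> v* diag_mat \<alpha>"
  define \<xi> where "\<xi> = (1 / (\<Sum>i\<in>UNIV. w$i)) *s w"
  have "0 \<le> w"
    using assms(3,6) by (simp add: w_def less_eq_vec_def prob_vec_def)
  moreover have "w \<noteq> 0"
  proof -
    obtain j where "\<alpha>$j \<noteq> 0"
      using assms(7) by (auto simp: vec_eq_iff)
    then show ?thesis
      using irreducible_stationary_pos[OF assms(1-4), of j] by (force simp: w_def vec_eq_iff)
  qed
  ultimately have "prob_vec \<xi>"
    unfolding \<xi>_def by (rule prob_vec_normalize)
  moreover have "\<xi> v* skip_mod r \<alpha> = \<xi>"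
    using skip_mod_stationary[OF assms(1,2,6,7,4)]
    by (simp add: \<xi>_def w_def scalar_vector_matrix_assoc)
  moreover have "\<xi> v* refl_mod r \<alpha> = \<xi>"
    using reversible_stationary[OF stochastic_refl_mod[OF assms(1,6)] reversible_refl_mod[OF assms(5)]]
    by (simp add: \<xi>_def w_def scalar_vector_matrix_assoc)
  ultimately show ?thesis
    unfolding peskun_le_def
    using invertible_id_minus_killed[OF assms(1,2,6,7)] stochastic_skip_mod[OF assms(1,2,6,7)]
      stochastic_refl_mod[OF assms(1,6)] refl_mod_le_skip_mod[OF assms(1,2,6,7)]
    by blast
qed

end
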